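(* Let $(X,\mathcal A,\mu,\mu^{\otimes2},R,I,\Pi_R,G,E_0,\eta)$ be a pre-structural datum satisfying the projection–measure invariance $\mu(\Pi_R^{-1}(B))=\mu(B)$ for all $B\in\mathcal A$ with $B\subseteq R$, and assume $X=R\sqcup I$. Then $\mu(I)=0$.
   Context: A pre-structural datum is a tuple $(X,\mathcal A,\mu,\mu^{\otimes2},R,I,\Pi_R,G,E_0,\eta)$ where: $X$ is a nonempty set; $\mathcal A\subseteq\mathcal P(X)$ is an algebra of sets; $\mu:\mathcal A\to[0,\infty)$ is finitely additive with $\mu(\varnothing)=0$; $\mu^{\otimes2}$ is a finitely additive set function on the algebra generated by rectangles $B_1\times B_2$ ($B_i\in\mathcal A$) with $\mu^{\otimes2}(B_1\times B_2)=\mu(B_1)\mu(B_2)$; $R,I\in\mathcal A$ are disjoint; $\Pi_R:X\to R$ is a map; $G\subseteq X\times X$ lies in that product algebra; $E_0\in(0,\infty)$; $\eta\in[0,1]$. *)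

theory Defs
  imports "HOL-Analysis.Analysis"
begin

definition rect_algebra :: "'a set \<Rightarrow> 'a set set \<Rightarrow> ('a \<times> 'a) set set" where
  "rect_algebra X A =
     \<Inter> {M. algebra (X \<times> X) M \<and> {B1 \<times> B2 | B1 B2. B1 \<in> A \<and> B2 \<in> A} \<subseteq> M}"

definition pre_structural_datum ::
  "'a set \<Rightarrow> 'a set set \<Rightarrow> ('a set \<Rightarrow> real) \<Rightarrow> (('a \<times> 'a) set \<Rightarrow> real) \<Rightarrow>
   'a set \<Rightarrow> 'a set \<Rightarrow> ('a \<Rightarrow> 'a) \<Rightarrow> ('a \<times> 'a) set \<Rightarrow> real \<Rightarrow> real \<Rightarrow> bool" where
  "pre_structural_datum X A \<mu> \<mu>2 R I PiR G E0 \<eta> \<longleftrightarrow>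
     X \<noteq> {} \<and>
     algebra X A \<and>
     (\<forall>B\<in>A. 0 \<le> \<mu> B) \<and> \<mu> {} = 0 \<and> additive A \<mu> \<and>
     additive (rect_algebra X A) \<mu>2 \<and>
     (\<forall>B1\<in>A. \<forall>B2\<in>A. \<mu>2 (B1 \<times> B2) = \<mu> B1 * \<mu> B2) \<and>
     R \<in> A \<and> I \<in> A \<and> R \<inter> I = {} \<and>
     (\<forall>x\<in>X. PiR x \<in> R) \<and>
     G \<in> rect_algebra X A \<and>
     0 < E0 \<and> 0 \<le> \<eta> \<and> \<eta> \<le> 1"

end

theory Submission
  imports Defs
begin

text \<open>Since \<open>\<Pi>\<^sub>R\<close> maps all of \<open>X\<close> into \<open>R\<close>, the invariance applied to \<open>B = R\<close> gives
  \<open>\<mu> X = \<mu> R\<close>; additivity over \<open>X = R \<union> I\<close> then leaves no mass for \<open>I\<close>.\<close>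

lemma additive_null_if_union_eq:
  fixes \<mu> :: "'a set \<Rightarrow> real"
  assumes "additive A \<mu>" "R \<in> A" "I \<in> A" "R \<inter> I = {}" "\<mu> (R \<union> I) = \<mu> R"
  shows "\<mu> I = 0"
  using assms by (simp add: additive_def)

lemma vimage_range_Int_eq:
  assumes "\<forall>x\<in>X. f x \<in> R"
  shows "f -` R \<inter> X = X"
  using assms by auto

theorem proposition4p3:
  fixes X :: "'a set" and A :: "'a set set" and \<mu> :: "'a set \<Rightarrow> real"
    and \<mu>2 :: "('a \<times> 'a) set \<Rightarrow> real" and R I :: "'a set" and PiR :: "'a \<Rightarrow> 'a"
    and G :: "('a \<times> 'a) set" and E0 \<eta> :: real
  assumes "pre_structural_datum X A \<mu> \<mu>2 R I PiR G E0 \<eta>"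
    and "\<forall>B\<in>A. B \<subseteq> R \<longrightarrow> (PiR -` B \<inter> X) \<in> A \<and> \<mu> (PiR -` B \<inter> X) = \<mu> B"
    and "X = R \<union> I"
  shows "\<mu> I = 0"
proof -
  have add: "additive A \<mu>" and R: "R \<in> A" and I: "I \<in> A" and disj: "R \<inter> I = {}"
    and into_R: "\<forall>x\<in>X. PiR x \<in> R"
    using assms(1) unfolding pre_structural_datum_def by auto
  have "\<mu> X = \<mu> R"
    using assms(2) R vimage_range_Int_eq[OF into_R] by force
  with assms(3) have "\<mu> (R \<union> I) = \<mu> R" by simp
  then show ?thesis
    by (rule additive_null_if_union_eq[OF add R I disj])
qed

end
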